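(* Let $\mathcal{C}$ be a pre-Hilbert $*$-category and $A$ an object of $\mathcal{C}$. Then the ordered $*$-ring $\mathcal{C}(A,A)$ is inverse closed: for all Hermitian $a,b\in\mathcal{C}(A,A)$, if $a\geq b$ and $b\succ 0$, then $a\succ 0$.
   Context: A $*$-category is a category with a choice of $f^*\colon Y\to X$ for each $f\colon X\to Y$ such that $1^*=1$, $(gf)^*=f^*g^*$, $(f^* )^*=f$. A pre-Hilbert $*$-category is a $*$-category with (R1) a zero object, (R2) orthonormal biproducts of all pairs of objects (biproducts $(X,s_1,r_1,s_2,r_2)$ with $r_k=s_k^*$), (R3) an isometric kernel (kernel $m$ with $m^*m=1$) for every morphism, and (R4) every diagonal $\Delta\colon X\to X\oplus X$ a kernel of some morphism. Such a category is additive, so $\mathcal{C}(A,A)$ is a ring (addition from the additive structure, multiplication by composition) with involution $a\mapsto a^*$. An endomorphism $a$ is Hermitian if $a^*=a$. The canonical order on Hermitian elements of $\mathcal{C}(A,A)$: $a\leq b$ iff $b-a = y^*y$ for some object $Y$ and some $y\colon A\to Y$. Write $a\prec b$ (or $b\succ a$) if $a\leq b$ and $b-a$ is invertible. *)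

theory Defs
  imports Main
begin

text \<open>A (small-or-large) category presented by carrier sets of objects and arrows,
  domain/codomain maps, composition (Comp g f means g after f), identities,
  together with an involution Star (the dagger).\<close>

record ('o, 'm) starcat =
  Obj  :: "'o set"
  Arr  :: "'m set"
  Dom  :: "'m \<Rightarrow> 'o"
  Cod  :: "'m \<Rightarrow> 'o"
  Comp :: "'m \<Rightarrow> 'm \<Rightarrow> 'm"
  Id   :: "'o \<Rightarrow> 'm"
  Star :: "'m \<Rightarrow> 'm"

definition hom :: "('o, 'm) starcat \<Rightarrow> 'o \<Rightarrow> 'o \<Rightarrow> 'm set" where
  "hom C X Y = {f \<in> Arr C. Dom C f = X \<and> Cod C f = Y}"

definition category :: "('o, 'm) starcat \<Rightarrow> bool" where
  "category C \<longleftrightarrow>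
     (\<forall>f \<in> Arr C. Dom C f \<in> Obj C \<and> Cod C f \<in> Obj C) \<and>
     (\<forall>X \<in> Obj C. Id C X \<in> hom C X X) \<and>
     (\<forall>X \<in> Obj C. \<forall>Y \<in> Obj C. \<forall>Z \<in> Obj C. \<forall>f \<in> hom C X Y. \<forall>g \<in> hom C Y Z.
        Comp C g f \<in> hom C X Z) \<and>
     (\<forall>W \<in> Obj C. \<forall>X \<in> Obj C. \<forall>Y \<in> Obj C. \<forall>Z \<in> Obj C.
        \<forall>f \<in> hom C W X. \<forall>g \<in> hom C X Y. \<forall>h \<in> hom C Y Z.
        Comp C h (Comp C g f) = Comp C (Comp C h g) f) \<and>
     (\<forall>X \<in> Obj C. \<forall>Y \<in> Obj C. \<forall>f \<in> hom C X Y.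
        Comp C f (Id C X) = f \<and> Comp C (Id C Y) f = f)"

definition star_category :: "('o, 'm) starcat \<Rightarrow> bool" where
  "star_category C \<longleftrightarrow> category C \<and>
     (\<forall>X \<in> Obj C. \<forall>Y \<in> Obj C. \<forall>f \<in> hom C X Y. Star C f \<in> hom C Y X) \<and>
     (\<forall>X \<in> Obj C. Star C (Id C X) = Id C X) \<and>
     (\<forall>X \<in> Obj C. \<forall>Y \<in> Obj C. \<forall>Z \<in> Obj C. \<forall>f \<in> hom C X Y. \<forall>g \<in> hom C Y Z.
        Star C (Comp C g f) = Comp C (Star C f) (Star C g)) \<and>
     (\<forall>f \<in> Arr C. Star C (Star C f) = f)"

definition zero_object :: "('o, 'm) starcat \<Rightarrow> 'o \<Rightarrow> bool" where
  "zero_object C Z \<longleftrightarrow> Z \<in> Obj C \<and>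
     (\<forall>X \<in> Obj C. (\<exists>!f. f \<in> hom C Z X) \<and> (\<exists>!f. f \<in> hom C X Z))"

definition zmor :: "('o, 'm) starcat \<Rightarrow> 'o \<Rightarrow> 'o \<Rightarrow> 'm" where
  "zmor C X Y = (THE h. \<exists>Z f g. zero_object C Z \<and> f \<in> hom C X Z \<and> g \<in> hom C Z Y
                          \<and> h = Comp C g f)"

definition biproduct ::
  "('o, 'm) starcat \<Rightarrow> 'o \<Rightarrow> 'o \<Rightarrow> 'o \<Rightarrow> 'm \<Rightarrow> 'm \<Rightarrow> 'm \<Rightarrow> 'm \<Rightarrow> bool" where
  "biproduct C X1 X2 P s1 r1 s2 r2 \<longleftrightarrow>
     X1 \<in> Obj C \<and> X2 \<in> Obj C \<and> P \<in> Obj C \<and>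
     s1 \<in> hom C X1 P \<and> r1 \<in> hom C P X1 \<and> s2 \<in> hom C X2 P \<and> r2 \<in> hom C P X2 \<and>
     Comp C r1 s1 = Id C X1 \<and> Comp C r2 s2 = Id C X2 \<and>
     Comp C r2 s1 = zmor C X1 X2 \<and> Comp C r1 s2 = zmor C X2 X1 \<and>
     (\<forall>W \<in> Obj C. \<forall>f1 \<in> hom C W X1. \<forall>f2 \<in> hom C W X2.
        \<exists>!u. u \<in> hom C W P \<and> Comp C r1 u = f1 \<and> Comp C r2 u = f2) \<and>
     (\<forall>W \<in> Obj C. \<forall>g1 \<in> hom C X1 W. \<forall>g2 \<in> hom C X2 W.
        \<exists>!v. v \<in> hom C P W \<and> Comp C v s1 = g1 \<and> Comp C v s2 = g2)"

definition orthonormal_biproduct ::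
  "('o, 'm) starcat \<Rightarrow> 'o \<Rightarrow> 'o \<Rightarrow> 'o \<Rightarrow> 'm \<Rightarrow> 'm \<Rightarrow> 'm \<Rightarrow> 'm \<Rightarrow> bool" where
  "orthonormal_biproduct C X1 X2 P s1 r1 s2 r2 \<longleftrightarrow>
     biproduct C X1 X2 P s1 r1 s2 r2 \<and> r1 = Star C s1 \<and> r2 = Star C s2"

definition is_kernel :: "('o, 'm) starcat \<Rightarrow> 'm \<Rightarrow> 'm \<Rightarrow> bool" where
  "is_kernel C f m \<longleftrightarrow>
     f \<in> Arr C \<and> m \<in> Arr C \<and> Cod C m = Dom C f \<and>
     Comp C f m = zmor C (Dom C m) (Cod C f) \<and>
     (\<forall>W \<in> Obj C. \<forall>g \<in> hom C W (Dom C f). Comp C f g = zmor C W (Cod C f) \<longrightarrow>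
        (\<exists>!h. h \<in> hom C W (Dom C m) \<and> Comp C m h = g))"

definition pre_hilbert_star_category :: "('o, 'm) starcat \<Rightarrow> bool" where
  "pre_hilbert_star_category C \<longleftrightarrow> star_category C \<and>
     \<comment> \<open>(R1) zero object\<close>
     (\<exists>Z. zero_object C Z) \<and>
     \<comment> \<open>(R2) orthonormal biproducts of all pairs\<close>
     (\<forall>X1 \<in> Obj C. \<forall>X2 \<in> Obj C. \<exists>P s1 r1 s2 r2. orthonormal_biproduct C X1 X2 P s1 r1 s2 r2) \<and>
     \<comment> \<open>(R3) isometric kernels\<close>
     (\<forall>f \<in> Arr C. \<exists>m. is_kernel C f m \<and> Comp C (Star C m) m = Id C (Dom C m)) \<and>
     \<comment> \<open>(R4) every diagonal is a kernel\<close>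
     (\<forall>X P s1 r1 s2 r2 d. orthonormal_biproduct C X X P s1 r1 s2 r2 \<and> d \<in> hom C X P \<and>
        Comp C r1 d = Id C X \<and> Comp C r2 d = Id C X \<longrightarrow> (\<exists>f. is_kernel C f d))"

text \<open>Addition of parallel morphisms induced by biproducts: f + g = codiagonal o <f,g>.\<close>
definition hadd :: "('o, 'm) starcat \<Rightarrow> 'm \<Rightarrow> 'm \<Rightarrow> 'm" where
  "hadd C f g = (THE h. \<exists>P s1 r1 s2 r2 u v.
      biproduct C (Cod C f) (Cod C f) P s1 r1 s2 r2 \<and>
      u \<in> hom C (Dom C f) P \<and> Comp C r1 u = f \<and> Comp C r2 u = g \<and>
      v \<in> hom C P (Cod C f) \<and> Comp C v s1 = Id C (Cod C f) \<and> Comp C v s2 = Id C (Cod C f) \<and>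
      h = Comp C v u)"

definition hneg :: "('o, 'm) starcat \<Rightarrow> 'm \<Rightarrow> 'm" where
  "hneg C f = (THE g. g \<in> hom C (Dom C f) (Cod C f) \<and> hadd C f g = zmor C (Dom C f) (Cod C f))"

definition hminus :: "('o, 'm) starcat \<Rightarrow> 'm \<Rightarrow> 'm \<Rightarrow> 'm" where
  "hminus C f g = hadd C f (hneg C g)"

definition invertible_mor :: "('o, 'm) starcat \<Rightarrow> 'm \<Rightarrow> bool" where
  "invertible_mor C f \<longleftrightarrow> f \<in> Arr C \<and>
     (\<exists>g \<in> hom C (Cod C f) (Dom C f). Comp C g f = Id C (Dom C f) \<and> Comp C f g = Id C (Cod C f))"

definition hermitian :: "('o, 'm) starcat \<Rightarrow> 'm \<Rightarrow> bool" where
  "hermitian C a \<longleftrightarrow> Star C a = a"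

definition canon_le :: "('o, 'm) starcat \<Rightarrow> 'o \<Rightarrow> 'm \<Rightarrow> 'm \<Rightarrow> bool" where
  "canon_le C A a b \<longleftrightarrow> a \<in> hom C A A \<and> b \<in> hom C A A \<and> hermitian C a \<and> hermitian C b \<and>
     (\<exists>Y \<in> Obj C. \<exists>y \<in> hom C A Y. hminus C b a = Comp C (Star C y) y)"

definition canon_prec :: "('o, 'm) starcat \<Rightarrow> 'o \<Rightarrow> 'm \<Rightarrow> 'm \<Rightarrow> bool" where
  "canon_prec C A a b \<longleftrightarrow> canon_le C A a b \<and> invertible_mor C (hminus C b a)"

end

theory Submission
  imports Defs
begin

text \<open>Write a - b = y\<dagger> y and b = z\<dagger> z with b invertible. The pairing w = (z, y) into the
  orthonormal biproduct Z \<oplus> Y satisfies w\<dagger> w = z\<dagger> z + y\<dagger> y = a, and it is a split mono with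
  left inverse b\<inverse> z\<dagger> p1, p1 the first projection. A split mono w with left inverse l
  factors as w = m h, where m is the isometric kernel of 1 - w l and h is invertible; hence
  a = w\<dagger> w = h\<dagger> h is invertible.
  Subtraction is available because (R4), the diagonal being a kernel, produces an additive
  inverse of each identity.\<close>

locale pre_hilbert =
  fixes C :: "('o, 'm) starcat"
  assumes pre_hilbert: "pre_hilbert_star_category C"
begin

abbreviation arr where "arr f \<equiv> f \<in> Arr C"
abbreviation ob where "ob X \<equiv> X \<in> Obj C"
abbreviation dm where "dm f \<equiv> Dom C f"
abbreviation cd where "cd f \<equiv> Cod C f"
abbreviation idm where "idm X \<equiv> Id C X"
abbreviation cmp (infixr "\<cdot>" 70) where "g \<cdot> f \<equiv> Comp C g f"
abbreviation star ("_\<^sup>\<dagger>" [1000] 1000) where "f\<^sup>\<dagger> \<equiv> Star C f"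
abbreviation zr where "zr X Y \<equiv> zmor C X Y"
abbreviation add (infixl "\<oplus>" 65) where "f \<oplus> g \<equiv> hadd C f g"
abbreviation sub (infixl "\<ominus>" 65) where "f \<ominus> g \<equiv> hminus C f g"

lemma is_category: "category C" and is_star_category: "star_category C"
  using pre_hilbert unfolding pre_hilbert_star_category_def star_category_def by auto

lemma in_hom_iff: "f \<in> hom C X Y \<longleftrightarrow> arr f \<and> dm f = X \<and> cd f = Y"
  by (simp add: hom_def)

lemma obj_dom [simp]: "arr f \<Longrightarrow> ob (dm f)"
  and obj_cod [simp]: "arr f \<Longrightarrow> ob (cd f)"
  using is_category unfolding category_def by auto

lemma hom_obj: "f \<in> hom C X Y \<Longrightarrow> ob X" "f \<in> hom C X Y \<Longrightarrow> ob Y"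
  unfolding in_hom_iff by auto

lemma comp_simps [simp]:
  assumes "arr f" "arr g" "dm g = cd f"
  shows "arr (g \<cdot> f)" "dm (g \<cdot> f) = dm f" "cd (g \<cdot> f) = cd g"
proof -
  have "f \<in> hom C (dm f) (cd f)" "g \<in> hom C (cd f) (cd g)" "ob (dm f)" "ob (cd f)" "ob (cd g)"
    using assms by (auto simp: in_hom_iff)
  then have "g \<cdot> f \<in> hom C (dm f) (cd g)"
    using is_category unfolding category_def by blast
  then show "arr (g \<cdot> f)" "dm (g \<cdot> f) = dm f" "cd (g \<cdot> f) = cd g" by (auto simp: in_hom_iff)
qed

lemma comp_assoc [simp]:
  assumes "arr f" "arr g" "arr h" "dm g = cd f" "dm h = cd g"
  shows "(h \<cdot> g) \<cdot> f = h \<cdot> (g \<cdot> f)"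
proof -
  have "f \<in> hom C (dm f) (cd f)" "g \<in> hom C (cd f) (cd g)" "h \<in> hom C (cd g) (cd h)"
    "ob (dm f)" "ob (cd f)" "ob (cd g)" "ob (cd h)"
    using assms by (auto simp: in_hom_iff)
  moreover have "\<forall>W \<in> Obj C. \<forall>X \<in> Obj C. \<forall>Y \<in> Obj C. \<forall>Z \<in> Obj C.
      \<forall>f \<in> hom C W X. \<forall>g \<in> hom C X Y. \<forall>h \<in> hom C Y Z. h \<cdot> (g \<cdot> f) = (h \<cdot> g) \<cdot> f"
    using is_category unfolding category_def by blast
  ultimately show ?thesis by metis
qed

lemma comp_reassoc:
  "r \<cdot> s = y \<Longrightarrow> arr s \<Longrightarrow> arr r \<Longrightarrow> arr x \<Longrightarrow> dm r = cd s \<Longrightarrow> dm s = cd x \<Longrightarrow>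
    r \<cdot> s \<cdot> x = y \<cdot> x"
  by (metis comp_assoc)

lemma id_simps [simp]:
  assumes "ob X"
  shows "arr (idm X)" "dm (idm X) = X" "cd (idm X) = X"
  using assms is_category unfolding category_def by (auto simp: in_hom_iff)

lemma comp_id_left [simp]: "arr f \<Longrightarrow> X = cd f \<Longrightarrow> idm X \<cdot> f = f"
  and comp_id_right [simp]: "arr f \<Longrightarrow> X = dm f \<Longrightarrow> f \<cdot> idm X = f"
proof -
  assume "arr f"
  then have "f \<in> hom C (dm f) (cd f)" "ob (dm f)" "ob (cd f)" by (auto simp: in_hom_iff)
  then have "idm (cd f) \<cdot> f = f \<and> f \<cdot> idm (dm f) = f"
    using is_category unfolding category_def by blast
  then show "X = cd f \<Longrightarrow> idm X \<cdot> f = f" "X = dm f \<Longrightarrow> f \<cdot> idm X = f" by auto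
qed

lemma star_simps [simp]:
  assumes "arr f"
  shows "arr (f\<^sup>\<dagger>)" "dm (f\<^sup>\<dagger>) = cd f" "cd (f\<^sup>\<dagger>) = dm f" "(f\<^sup>\<dagger>)\<^sup>\<dagger> = f"
proof -
  have "f \<in> hom C (dm f) (cd f)" "ob (dm f)" "ob (cd f)" using assms by (auto simp: in_hom_iff)
  then have "f\<^sup>\<dagger> \<in> hom C (cd f) (dm f)" using is_star_category unfolding star_category_def by blast
  then show "arr (f\<^sup>\<dagger>)" "dm (f\<^sup>\<dagger>) = cd f" "cd (f\<^sup>\<dagger>) = dm f" by (auto simp: in_hom_iff)
  show "(f\<^sup>\<dagger>)\<^sup>\<dagger> = f" using assms is_star_category unfolding star_category_def by blast
qed

lemma star_id [simp]: "ob X \<Longrightarrow> (idm X)\<^sup>\<dagger> = idm X"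
  using is_star_category unfolding star_category_def by auto

lemma star_comp [simp]:
  assumes "arr f" "arr g" "dm g = cd f"
  shows "(g \<cdot> f)\<^sup>\<dagger> = f\<^sup>\<dagger> \<cdot> g\<^sup>\<dagger>"
proof -
  have "f \<in> hom C (dm f) (cd f)" "g \<in> hom C (cd f) (cd g)" "ob (dm f)" "ob (cd f)" "ob (cd g)"
    using assms by (auto simp: in_hom_iff)
  then show ?thesis using is_star_category unfolding star_category_def by blast
qed

section \<open>Zero morphisms\<close>

lemma zero_object_comp_unique:
  assumes "zero_object C Z" "zero_object C Z'" "f \<in> hom C X Z" "g \<in> hom C Z Y"
    "f' \<in> hom C X Z'" "g' \<in> hom C Z' Y"
  shows "g \<cdot> f = g' \<cdot> f'"
proof -
  have "ob Z'" using assms(2) unfolding zero_object_def by blast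
  have "ob X" "ob Y" using assms(3,4) hom_obj by blast+
  obtain i where i: "i \<in> hom C Z Z'" using assms(1) \<open>ob Z'\<close> unfolding zero_object_def by blast
  have "\<exists>!h. h \<in> hom C X Z'" using assms(2) \<open>ob X\<close> unfolding zero_object_def by blast
  moreover have "i \<cdot> f \<in> hom C X Z'" using i assms(3) by (auto simp: in_hom_iff)
  ultimately have if': "i \<cdot> f = f'" using assms(5) by blast
  have "\<exists>!h. h \<in> hom C Z Y" using assms(1) \<open>ob Y\<close> unfolding zero_object_def by blast
  moreover have "g' \<cdot> i \<in> hom C Z Y" using i assms(6) by (auto simp: in_hom_iff)
  ultimately have g'i: "g' \<cdot> i = g" using assms(4) by blast
  have "g' \<cdot> (i \<cdot> f) = (g' \<cdot> i) \<cdot> f" using i assms(3,6) by (simp add: in_hom_iff)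
  then show ?thesis using if' g'i by simp
qed

lemma zmor_eq:
  assumes "zero_object C Z" "f \<in> hom C X Z" "g \<in> hom C Z Y"
  shows "zr X Y = g \<cdot> f"
  unfolding zmor_def
proof (rule the_equality)
  show "\<exists>Z f' g'. zero_object C Z \<and> f' \<in> hom C X Z \<and> g' \<in> hom C Z Y \<and> g \<cdot> f = g' \<cdot> f'"
    using assms by blast
  fix h
  assume "\<exists>Z f' g'. zero_object C Z \<and> f' \<in> hom C X Z \<and> g' \<in> hom C Z Y \<and> h = g' \<cdot> f'"
  then obtain Z' f' g' where "zero_object C Z'" "f' \<in> hom C X Z'" "g' \<in> hom C Z' Y" "h = g' \<cdot> f'"
    by blast
  then show "h = g \<cdot> f" using zero_object_comp_unique[OF _ assms(1) _ _ assms(2,3)] by blast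
qed

lemma zmor_factor:
  assumes "ob X" "ob Y"
  obtains Z f g where "zero_object C Z" "f \<in> hom C X Z" "g \<in> hom C Z Y" "zr X Y = g \<cdot> f"
proof -
  obtain Z where Z: "zero_object C Z" using pre_hilbert unfolding pre_hilbert_star_category_def by auto
  then have "\<exists>f. f \<in> hom C X Z" "\<exists>g. g \<in> hom C Z Y"
    using assms unfolding zero_object_def by blast+
  then obtain f g where fg: "f \<in> hom C X Z" "g \<in> hom C Z Y" by blast
  then show ?thesis using that Z zmor_eq[OF Z fg] by blast
qed

lemma zmor_hom [simp]:
  assumes "ob X" "ob Y"
  shows "zr X Y \<in> hom C X Y"
proof -
  obtain Z f g where "f \<in> hom C X Z" "g \<in> hom C Z Y" "zr X Y = g \<cdot> f"
    using zmor_factor[OF assms] by blast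
  then show ?thesis by (simp add: in_hom_iff)
qed

lemma zmor_simps [simp]:
  assumes "ob X" "ob Y"
  shows "arr (zr X Y)" "dm (zr X Y) = X" "cd (zr X Y) = Y"
  using zmor_hom[OF assms] unfolding in_hom_iff by auto

lemma comp_zmor [simp]:
  assumes "arr h" "dm h = Y" "ob X"
  shows "h \<cdot> zr X Y = zr X (cd h)"
proof -
  have "ob Y" using assms by auto
  obtain Z f g where Z: "zero_object C Z" "f \<in> hom C X Z" "g \<in> hom C Z Y" "zr X Y = g \<cdot> f"
    using zmor_factor[OF \<open>ob X\<close> \<open>ob Y\<close>] by blast
  have "h \<cdot> g \<in> hom C Z (cd h)" using Z(3) assms by (simp add: in_hom_iff)
  then have "zr X (cd h) = (h \<cdot> g) \<cdot> f" using zmor_eq Z(1,2) by blast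
  also have "\<dots> = h \<cdot> (g \<cdot> f)" using Z(2,3) assms by (simp add: in_hom_iff)
  finally show ?thesis using Z(4) by simp
qed

lemma zmor_comp [simp]:
  assumes "arr k" "cd k = X" "ob Y"
  shows "zr X Y \<cdot> k = zr (dm k) Y"
proof -
  have "ob X" using assms by auto
  obtain Z f g where Z: "zero_object C Z" "f \<in> hom C X Z" "g \<in> hom C Z Y" "zr X Y = g \<cdot> f"
    using zmor_factor[OF \<open>ob X\<close> \<open>ob Y\<close>] by blast
  have "f \<cdot> k \<in> hom C (dm k) Z" using Z(2) assms by (simp add: in_hom_iff)
  then have "zr (dm k) Y = g \<cdot> (f \<cdot> k)" using zmor_eq Z(1,3) by blast
  also have "\<dots> = (g \<cdot> f) \<cdot> k" using Z(2,3) assms by (simp add: in_hom_iff)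
  finally show ?thesis using Z(4) by simp
qed

lemma star_zmor [simp]:
  assumes "ob X" "ob Y"
  shows "(zr X Y)\<^sup>\<dagger> = zr Y X"
proof -
  obtain Z f g where Z: "zero_object C Z" "f \<in> hom C X Z" "g \<in> hom C Z Y" "zr X Y = g \<cdot> f"
    using zmor_factor[OF assms] by blast
  have "f\<^sup>\<dagger> \<in> hom C Z X" "g\<^sup>\<dagger> \<in> hom C Y Z" using Z(2,3) by (auto simp: in_hom_iff)
  then have "zr Y X = f\<^sup>\<dagger> \<cdot> g\<^sup>\<dagger>" using zmor_eq Z(1) by blast
  also have "\<dots> = (g \<cdot> f)\<^sup>\<dagger>" using Z(2,3) by (simp add: in_hom_iff)
  finally show ?thesis using Z(4) by simp
qed

section \<open>Biproducts\<close>

lemma biproductD: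
  assumes "biproduct C X1 X2 P s1 r1 s2 r2"
  shows "s1 \<in> hom C X1 P" "r1 \<in> hom C P X1" "s2 \<in> hom C X2 P" "r2 \<in> hom C P X2"
    "r1 \<cdot> s1 = idm X1" "r2 \<cdot> s2 = idm X2" "r2 \<cdot> s1 = zr X1 X2" "r1 \<cdot> s2 = zr X2 X1"
    "ob X1" "ob X2" "ob P"
  using assms unfolding biproduct_def by auto

lemma biproduct_swap:
  "biproduct C X1 X2 P s1 r1 s2 r2 \<Longrightarrow> biproduct C X2 X1 P s2 r2 s1 r1"
  unfolding biproduct_def by blast

lemma biproduct_pairE:
  assumes "biproduct C X1 X2 P s1 r1 s2 r2" "f1 \<in> hom C W X1" "f2 \<in> hom C W X2"
  obtains u where "u \<in> hom C W P" "r1 \<cdot> u = f1" "r2 \<cdot> u = f2"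
proof -
  have "ob W" using hom_obj assms(2) by blast
  then show ?thesis using assms that unfolding biproduct_def by blast
qed

lemma biproduct_pair_unique:
  assumes bp: "biproduct C X1 X2 P s1 r1 s2 r2" and "u \<in> hom C W P" "u' \<in> hom C W P"
    and "r1 \<cdot> u = r1 \<cdot> u'" "r2 \<cdot> u = r2 \<cdot> u'"
  shows "u = u'"
proof -
  have "r1 \<cdot> u \<in> hom C W X1" "r2 \<cdot> u \<in> hom C W X2"
    using assms(2) biproductD[OF bp] by (simp_all add: in_hom_iff)
  then have "\<exists>!v. v \<in> hom C W P \<and> r1 \<cdot> v = r1 \<cdot> u \<and> r2 \<cdot> v = r2 \<cdot> u"
    using bp hom_obj(1)[OF assms(2)] unfolding biproduct_def by blast
  then show ?thesis using assms by metis
qed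

lemma biproduct_copairE:
  assumes "biproduct C X1 X2 P s1 r1 s2 r2" "g1 \<in> hom C X1 W" "g2 \<in> hom C X2 W"
  obtains v where "v \<in> hom C P W" "v \<cdot> s1 = g1" "v \<cdot> s2 = g2"
proof -
  have "ob W" using hom_obj assms(2) by blast
  then show ?thesis using assms that unfolding biproduct_def by blast
qed

lemma biproduct_copair_unique:
  assumes bp: "biproduct C X1 X2 P s1 r1 s2 r2" and "v \<in> hom C P W" "v' \<in> hom C P W"
    and "v \<cdot> s1 = v' \<cdot> s1" "v \<cdot> s2 = v' \<cdot> s2"
  shows "v = v'"
proof -
  have "v \<cdot> s1 \<in> hom C X1 W" "v \<cdot> s2 \<in> hom C X2 W"
    using assms(2) biproductD[OF bp] by (simp_all add: in_hom_iff)
  then have "\<exists>!w. w \<in> hom C P W \<and> w \<cdot> s1 = v \<cdot> s1 \<and> w \<cdot> s2 = v \<cdot> s2"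
    using bp hom_obj(2)[OF assms(2)] unfolding biproduct_def by blast
  then show ?thesis using assms by metis
qed

lemma codiagonalE:
  assumes "biproduct C Y Y P s1 r1 s2 r2"
  obtains v where "v \<in> hom C P Y" "v \<cdot> s1 = idm Y" "v \<cdot> s2 = idm Y"
proof -
  have "idm Y \<in> hom C Y Y" using biproductD[OF assms] by (simp add: in_hom_iff)
  then show ?thesis using biproduct_copairE[OF assms] that by blast
qed

lemma orthonormal_biproduct_exists:
  "ob X1 \<Longrightarrow> ob X2 \<Longrightarrow> \<exists>P s1 r1 s2 r2. orthonormal_biproduct C X1 X2 P s1 r1 s2 r2"
  using pre_hilbert unfolding pre_hilbert_star_category_def by blast

lemma orthonormal_biproductE:
  assumes "ob X1" "ob X2"
  obtains P s1 s2 where "orthonormal_biproduct C X1 X2 P s1 (s1\<^sup>\<dagger>) s2 (s2\<^sup>\<dagger>)"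
  using orthonormal_biproduct_exists[OF assms] that unfolding orthonormal_biproduct_def by blast

lemma orthonormal_biproductD:
  "orthonormal_biproduct C X1 X2 P s1 r1 s2 r2 \<Longrightarrow> biproduct C X1 X2 P s1 r1 s2 r2"
  unfolding orthonormal_biproduct_def by auto

lemma biproductE:
  assumes "ob X1" "ob X2"
  obtains P s1 r1 s2 r2 where "biproduct C X1 X2 P s1 r1 s2 r2"
  using orthonormal_biproductE[OF assms] orthonormal_biproductD by metis

lemma biproduct_comparisonE:
  assumes bp: "biproduct C X1 X2 P s1 r1 s2 r2" and bp': "biproduct C X1 X2 P' s1' r1' s2' r2'"
  obtains \<phi> where "\<phi> \<in> hom C P P'" "\<phi> \<cdot> s1 = s1'" "\<phi> \<cdot> s2 = s2'" "r1' \<cdot> \<phi> = r1" "r2' \<cdot> \<phi> = r2"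
proof -
  note B = biproductD[OF bp] and B' = biproductD[OF bp']
  note [simp] = B(1-4)[unfolded in_hom_iff] B'(1-4)[unfolded in_hom_iff] B(5-11) B'(5-11)
  obtain \<phi> where \<phi>: "\<phi> \<in> hom C P P'" "\<phi> \<cdot> s1 = s1'" "\<phi> \<cdot> s2 = s2'"
    using biproduct_copairE[OF bp B'(1) B'(3)] by blast
  note [simp] = \<phi>(1)[unfolded in_hom_iff] \<phi>(2,3)
  have "r1' \<cdot> \<phi> = r1"
    by (rule biproduct_copair_unique[OF bp]) (simp_all add: in_hom_iff)
  moreover have "r2' \<cdot> \<phi> = r2"
    by (rule biproduct_copair_unique[OF bp]) (simp_all add: in_hom_iff)
  ultimately show ?thesis using that \<phi> by blast
qed

section \<open>The additive structure\<close>

lemma hadd_eq_comp: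
  assumes bp: "biproduct C Y Y P s1 r1 s2 r2" and f: "f \<in> hom C X Y"
    and u: "u \<in> hom C X P" "r1 \<cdot> u = f" "r2 \<cdot> u = g"
    and v: "v \<in> hom C P Y" "v \<cdot> s1 = idm Y" "v \<cdot> s2 = idm Y"
  shows "f \<oplus> g = v \<cdot> u"
proof -
  have df: "dm f = X" "cd f = Y" using f by (simp_all add: in_hom_iff)
  show ?thesis
    unfolding hadd_def df
  proof (rule the_equality)
    show "\<exists>P s1 r1 s2 r2 u' v'. biproduct C Y Y P s1 r1 s2 r2 \<and>
        u' \<in> hom C X P \<and> r1 \<cdot> u' = f \<and> r2 \<cdot> u' = g \<and>
        v' \<in> hom C P Y \<and> v' \<cdot> s1 = idm Y \<and> v' \<cdot> s2 = idm Y \<and> v \<cdot> u = v' \<cdot> u'"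
      using bp u v by blast
  next
    fix h
    assume "\<exists>P s1 r1 s2 r2 u' v'. biproduct C Y Y P s1 r1 s2 r2 \<and>
        u' \<in> hom C X P \<and> r1 \<cdot> u' = f \<and> r2 \<cdot> u' = g \<and>
        v' \<in> hom C P Y \<and> v' \<cdot> s1 = idm Y \<and> v' \<cdot> s2 = idm Y \<and> h = v' \<cdot> u'"
    then obtain P' s1' r1' s2' r2' u' v' where bp': "biproduct C Y Y P' s1' r1' s2' r2'"
      and u': "u' \<in> hom C X P'" "r1' \<cdot> u' = f" "r2' \<cdot> u' = g"
      and v': "v' \<in> hom C P' Y" "v' \<cdot> s1' = idm Y" "v' \<cdot> s2' = idm Y" and h: "h = v' \<cdot> u'"
      by blast
    obtain \<phi> where \<phi>: "\<phi> \<in> hom C P P'" "\<phi> \<cdot> s1 = s1'" "\<phi> \<cdot> s2 = s2'" "r1' \<cdot> \<phi> = r1" "r2' \<cdot> \<phi> = r2"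
      using biproduct_comparisonE[OF bp bp'] by blast
    note B = biproductD[OF bp] and B' = biproductD[OF bp']
    note [simp] = B(1-4)[unfolded in_hom_iff] B'(1-4)[unfolded in_hom_iff] \<phi>(1)[unfolded in_hom_iff]
      u(1)[unfolded in_hom_iff] v(1)[unfolded in_hom_iff] v'(1)[unfolded in_hom_iff]
      comp_reassoc[OF \<phi>(4)] comp_reassoc[OF \<phi>(5)] \<phi>(2,3)
    have \<phi>u: "\<phi> \<cdot> u = u'"
      by (rule biproduct_pair_unique[OF bp']) (use u u' in \<open>simp_all add: in_hom_iff\<close>)
    have "v' \<cdot> \<phi> = v"
      by (rule biproduct_copair_unique[OF bp]) (use v v' in \<open>simp_all add: in_hom_iff\<close>)
    then have "v' \<cdot> \<phi> \<cdot> u = v \<cdot> u" using comp_reassoc by simp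
    then show "h = v \<cdot> u" using h \<phi>u by simp
  qed
qed

lemma hadd_reprE:
  assumes f: "f \<in> hom C X Y" and g: "g \<in> hom C X Y"
  obtains P s1 r1 s2 r2 u v where "biproduct C Y Y P s1 r1 s2 r2"
    "u \<in> hom C X P" "r1 \<cdot> u = f" "r2 \<cdot> u = g"
    "v \<in> hom C P Y" "v \<cdot> s1 = idm Y" "v \<cdot> s2 = idm Y" "f \<oplus> g = v \<cdot> u"
proof -
  obtain P s1 r1 s2 r2 where bp: "biproduct C Y Y P s1 r1 s2 r2"
    using biproductE hom_obj(2)[OF f] by metis
  obtain v where v: "v \<in> hom C P Y" "v \<cdot> s1 = idm Y" "v \<cdot> s2 = idm Y"
    using codiagonalE[OF bp] by blast
  obtain u where u: "u \<in> hom C X P" "r1 \<cdot> u = f" "r2 \<cdot> u = g"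
    using biproduct_pairE[OF bp f g] by blast
  show ?thesis using that[OF bp u v hadd_eq_comp[OF bp f u v]] .
qed

lemma hadd_hom [simp]:
  assumes "f \<in> hom C X Y" "g \<in> hom C X Y"
  shows "f \<oplus> g \<in> hom C X Y"
proof -
  obtain P u v where "u \<in> hom C X P" "v \<in> hom C P Y" "f \<oplus> g = v \<cdot> u"
    using hadd_reprE[OF assms] by metis
  then show ?thesis by (simp add: in_hom_iff)
qed

lemma hadd_commute:
  assumes f: "f \<in> hom C X Y" and g: "g \<in> hom C X Y"
  shows "f \<oplus> g = g \<oplus> f"
proof -
  obtain P s1 r1 s2 r2 u v where bp: "biproduct C Y Y P s1 r1 s2 r2"
    and u: "u \<in> hom C X P" "r1 \<cdot> u = f" "r2 \<cdot> u = g"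
    and v: "v \<in> hom C P Y" "v \<cdot> s1 = idm Y" "v \<cdot> s2 = idm Y" and fg: "f \<oplus> g = v \<cdot> u"
    using hadd_reprE[OF f g] by blast
  show ?thesis
    using fg hadd_eq_comp[OF biproduct_swap[OF bp] g u(1) u(3) u(2) v(1) v(3) v(2)] by simp
qed

lemma hadd_zmor_right:
  assumes f: "f \<in> hom C X Y"
  shows "f \<oplus> zr X Y = f"
proof -
  have [simp]: "ob X" "ob Y" "arr f" "dm f = X" "cd f = Y" using f hom_obj by (auto simp: in_hom_iff)
  obtain P s1 r1 s2 r2 where bp: "biproduct C Y Y P s1 r1 s2 r2"
    using biproductE[OF \<open>ob Y\<close> \<open>ob Y\<close>] by blast
  note B = biproductD[OF bp]
  note [simp] = B(1-4)[unfolded in_hom_iff] B(5-11) comp_reassoc[OF B(5)] comp_reassoc[OF B(7)]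
  obtain v where v: "v \<in> hom C P Y" "v \<cdot> s1 = idm Y" "v \<cdot> s2 = idm Y"
    using codiagonalE[OF bp] by blast
  note [simp] = v(1)[unfolded in_hom_iff] comp_reassoc[OF v(2)]
  have "f \<oplus> zr X Y = v \<cdot> s1 \<cdot> f"
    by (rule hadd_eq_comp[OF bp f _ _ _ v]) (simp_all add: in_hom_iff)
  then show ?thesis by simp
qed

lemma hadd_zmor_left:
  assumes "f \<in> hom C X Y"
  shows "zr X Y \<oplus> f = f"
  using assms hom_obj hadd_commute[OF assms, of "zr X Y"] hadd_zmor_right[OF assms] by simp

lemma hadd_comp_distrib:
  assumes f: "f \<in> hom C X Y" and g: "g \<in> hom C X Y" and k: "k \<in> hom C W X"
  shows "(f \<oplus> g) \<cdot> k = (f \<cdot> k) \<oplus> (g \<cdot> k)"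
proof -
  obtain P s1 r1 s2 r2 u v where bp: "biproduct C Y Y P s1 r1 s2 r2"
    and u: "u \<in> hom C X P" "r1 \<cdot> u = f" "r2 \<cdot> u = g"
    and v: "v \<in> hom C P Y" "v \<cdot> s1 = idm Y" "v \<cdot> s2 = idm Y" and fg: "f \<oplus> g = v \<cdot> u"
    using hadd_reprE[OF f g] by blast
  note B = biproductD[OF bp]
  note [simp] = B(1-4)[unfolded in_hom_iff] u(1)[unfolded in_hom_iff] k[unfolded in_hom_iff]
    v(1)[unfolded in_hom_iff] comp_reassoc[OF u(2)] comp_reassoc[OF u(3)]
  have "(f \<cdot> k) \<oplus> (g \<cdot> k) = v \<cdot> u \<cdot> k"
    by (rule hadd_eq_comp[OF bp _ _ _ _ v]) (use f in \<open>simp_all add: in_hom_iff\<close>)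
  then show ?thesis using fg by simp
qed

lemma biproduct_map_comp_injection:
  assumes bpQ: "biproduct C A1 A2 Q t1 p1 t2 p2" and bpP: "biproduct C Y1 Y2 P s1 r1 s2 r2"
    and f1: "f1 \<in> hom C A1 Y1" and f2: "f2 \<in> hom C A2 Y2"
    and \<phi>: "\<phi> \<in> hom C Q P" "r1 \<cdot> \<phi> = f1 \<cdot> p1" "r2 \<cdot> \<phi> = f2 \<cdot> p2"
  shows "\<phi> \<cdot> t1 = s1 \<cdot> f1"
proof -
  note BQ = biproductD[OF bpQ] and BP = biproductD[OF bpP]
  note [simp] = BQ(1-4)[unfolded in_hom_iff] BP(1-4)[unfolded in_hom_iff] BQ(5-11) BP(5-11)
    f1[unfolded in_hom_iff] f2[unfolded in_hom_iff] \<phi>(1)[unfolded in_hom_iff]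
    comp_reassoc[OF \<phi>(2)] comp_reassoc[OF \<phi>(3)] comp_reassoc[OF BP(5)] comp_reassoc[OF BP(7)]
  show ?thesis
    by (rule biproduct_pair_unique[OF bpP]) (simp_all add: in_hom_iff)
qed

lemma comp_eq_hadd_biproduct:
  assumes bp: "biproduct C A1 A2 Q t1 p1 t2 p2" and u: "u \<in> hom C X Q" and v: "v \<in> hom C Q Y"
  shows "v \<cdot> u = (v \<cdot> t1 \<cdot> p1 \<cdot> u) \<oplus> (v \<cdot> t2 \<cdot> p2 \<cdot> u)"
proof -
  note BQ = biproductD[OF bp]
  note [simp] = BQ(1-4)[unfolded in_hom_iff] u[unfolded in_hom_iff] v[unfolded in_hom_iff]
  obtain P s1 r1 s2 r2 where bpP: "biproduct C Y Y P s1 r1 s2 r2"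
    using biproductE hom_obj(2)[OF v] by metis
  note BP = biproductD[OF bpP]
  note [simp] = BP(1-4)[unfolded in_hom_iff]
  obtain d where d: "d \<in> hom C P Y" "d \<cdot> s1 = idm Y" "d \<cdot> s2 = idm Y"
    using codiagonalE[OF bpP] by blast
  have vt: "v \<cdot> t1 \<in> hom C A1 Y" "v \<cdot> t2 \<in> hom C A2 Y" by (simp_all add: in_hom_iff)
  have "(v \<cdot> t1) \<cdot> p1 \<in> hom C Q Y" "(v \<cdot> t2) \<cdot> p2 \<in> hom C Q Y" by (simp_all add: in_hom_iff)
  then obtain \<phi> where \<phi>: "\<phi> \<in> hom C Q P" "r1 \<cdot> \<phi> = (v \<cdot> t1) \<cdot> p1" "r2 \<cdot> \<phi> = (v \<cdot> t2) \<cdot> p2"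
    using biproduct_pairE[OF bpP] by blast
  have \<phi>t1: "\<phi> \<cdot> t1 = s1 \<cdot> v \<cdot> t1"
    using biproduct_map_comp_injection[OF bp bpP vt \<phi>] .
  have \<phi>t2: "\<phi> \<cdot> t2 = s2 \<cdot> v \<cdot> t2"
    using biproduct_map_comp_injection[OF biproduct_swap[OF bp] biproduct_swap[OF bpP] vt(2,1)
        \<phi>(1,3,2)] .
  note [simp] = d(1)[unfolded in_hom_iff] \<phi>(1)[unfolded in_hom_iff]
    comp_reassoc[OF \<phi>(2)] comp_reassoc[OF \<phi>(3)] comp_reassoc[OF d(2)] comp_reassoc[OF d(3)]
  have d\<phi>: "d \<cdot> \<phi> = v"
    by (rule biproduct_copair_unique[OF bp]) (simp_all add: in_hom_iff \<phi>t1 \<phi>t2)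
  have "(v \<cdot> t1 \<cdot> p1 \<cdot> u) \<oplus> (v \<cdot> t2 \<cdot> p2 \<cdot> u) = d \<cdot> \<phi> \<cdot> u"
    by (rule hadd_eq_comp[OF bpP _ _ _ _ d]) (simp_all add: in_hom_iff)
  then show ?thesis using comp_reassoc[OF d\<phi>] by simp
qed

lemma comp_hadd_distrib:
  assumes f: "f \<in> hom C X Y" and g: "g \<in> hom C X Y" and k: "k \<in> hom C Y Z"
  shows "k \<cdot> (f \<oplus> g) = (k \<cdot> f) \<oplus> (k \<cdot> g)"
proof -
  obtain P s1 r1 s2 r2 u v where bp: "biproduct C Y Y P s1 r1 s2 r2"
    and u: "u \<in> hom C X P" "r1 \<cdot> u = f" "r2 \<cdot> u = g"
    and v: "v \<in> hom C P Y" "v \<cdot> s1 = idm Y" "v \<cdot> s2 = idm Y" and fg: "f \<oplus> g = v \<cdot> u"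
    using hadd_reprE[OF f g] by blast
  note B = biproductD[OF bp]
  note [simp] = B(1-4)[unfolded in_hom_iff] u(1)[unfolded in_hom_iff] k[unfolded in_hom_iff]
    v(1)[unfolded in_hom_iff] comp_reassoc[OF v(2)] comp_reassoc[OF v(3)] u(2,3)
    f[unfolded in_hom_iff] g[unfolded in_hom_iff]
  have "k \<cdot> v \<in> hom C P Z" by (simp add: in_hom_iff)
  from comp_eq_hadd_biproduct[OF bp u(1) this] show ?thesis using fg by simp
qed

lemma hadd_assoc:
  assumes f: "f \<in> hom C X Y" and g: "g \<in> hom C X Y" and h: "h \<in> hom C X Y"
  shows "(f \<oplus> g) \<oplus> h = f \<oplus> (g \<oplus> h)"
proof -
  obtain P s1 r1 s2 r2 u v where bp: "biproduct C Y Y P s1 r1 s2 r2"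
    and u: "u \<in> hom C X P" "r1 \<cdot> u = f" "r2 \<cdot> u = g"
    and v: "v \<in> hom C P Y" "v \<cdot> s1 = idm Y" "v \<cdot> s2 = idm Y" and fg: "f \<oplus> g = v \<cdot> u"
    using hadd_reprE[OF f g] by blast
  note B = biproductD[OF bp]
  have [simp]: "ob X" using hom_obj f by blast
  note [simp] = B(1-4)[unfolded in_hom_iff] B(5-11) u(1)[unfolded in_hom_iff] h[unfolded in_hom_iff]
    v(1)[unfolded in_hom_iff] comp_reassoc[OF v(3)] comp_reassoc[OF B(6)] comp_reassoc[OF B(8)]
  have s2h: "s2 \<cdot> h \<in> hom C X P" by (simp add: in_hom_iff)
  have "(f \<oplus> g) \<oplus> h = (v \<cdot> u) \<oplus> (v \<cdot> s2 \<cdot> h)" using fg by simp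
  also have "\<dots> = v \<cdot> (u \<oplus> (s2 \<cdot> h))" using comp_hadd_distrib[OF u(1) s2h v(1)] by simp
  also have "\<dots> = f \<oplus> (g \<oplus> h)"
  proof (rule hadd_eq_comp[OF bp f _ _ _ v, symmetric])
    show "u \<oplus> s2 \<cdot> h \<in> hom C X P" using u(1) s2h by simp
    show "r1 \<cdot> (u \<oplus> s2 \<cdot> h) = f"
      using comp_hadd_distrib[OF u(1) s2h B(2)] hadd_zmor_right[OF f] u by simp
    show "r2 \<cdot> (u \<oplus> s2 \<cdot> h) = g \<oplus> h"
      using comp_hadd_distrib[OF u(1) s2h B(4)] u by simp
  qed
  finally show ?thesis .
qed

lemma hadd_inverse_unique:
  assumes a: "a \<in> hom C X Y" and b: "b \<in> hom C X Y" and c: "c \<in> hom C X Y"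
    and "a \<oplus> c = zr X Y" "b \<oplus> c = zr X Y"
  shows "a = b"
proof -
  have "a = a \<oplus> (b \<oplus> c)" using hadd_zmor_right[OF a] assms by simp
  also have "\<dots> = (a \<oplus> c) \<oplus> b" using hadd_commute[OF b c] hadd_assoc[OF a c b] by simp
  also have "\<dots> = b" using hadd_zmor_left[OF b] assms by simp
  finally show ?thesis .
qed

section \<open>Additive inverses\<close>

lemma isometric_kernel_exists: "arr f \<Longrightarrow> \<exists>m. is_kernel C f m \<and> m\<^sup>\<dagger> \<cdot> m = idm (dm m)"
  using pre_hilbert unfolding pre_hilbert_star_category_def by blast

lemma diagonal_is_kernel:
  "orthonormal_biproduct C X X P s1 r1 s2 r2 \<Longrightarrow> d \<in> hom C X P \<Longrightarrow>
    r1 \<cdot> d = idm X \<Longrightarrow> r2 \<cdot> d = idm X \<Longrightarrow> \<exists>f. is_kernel C f d"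
  using pre_hilbert unfolding pre_hilbert_star_category_def by blast

lemma is_kernelD:
  assumes "is_kernel C f m"
  shows "arr f" "arr m" "cd m = dm f" "f \<cdot> m = zr (dm m) (cd f)"
  using assms unfolding is_kernel_def by auto

lemma kernel_factorE:
  assumes "is_kernel C f m" "g \<in> hom C W (dm f)" "f \<cdot> g = zr W (cd f)"
  obtains h where "h \<in> hom C W (dm m)" "m \<cdot> h = g"
proof -
  have "ob W" using hom_obj assms(2) by blast
  then show ?thesis using assms that unfolding is_kernel_def by blast
qed

lemma star_comp_self_eq_of_hadd_zero:
  assumes x1: "x1 \<in> hom C K Y" and x2: "x2 \<in> hom C K Y"
    and "x1 \<oplus> x2 = zr K Y" and "x1\<^sup>\<dagger> \<oplus> x2\<^sup>\<dagger> = zr Y K"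
  shows "x1\<^sup>\<dagger> \<cdot> x1 = x2\<^sup>\<dagger> \<cdot> x2"
proof (rule hadd_inverse_unique)
  have [simp]: "ob K" "ob Y" using hom_obj x1 by blast+
  note [simp] = x1[unfolded in_hom_iff] x2[unfolded in_hom_iff]
  have x1': "x1\<^sup>\<dagger> \<in> hom C Y K" and x2': "x2\<^sup>\<dagger> \<in> hom C Y K" by (simp_all add: in_hom_iff)
  show "x1\<^sup>\<dagger> \<cdot> x1 \<in> hom C K K" "x2\<^sup>\<dagger> \<cdot> x2 \<in> hom C K K" "x2\<^sup>\<dagger> \<cdot> x1 \<in> hom C K K"
    by (simp_all add: in_hom_iff)
  show "x1\<^sup>\<dagger> \<cdot> x1 \<oplus> x2\<^sup>\<dagger> \<cdot> x1 = zr K K"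
    using hadd_comp_distrib[OF x1' x2' x1] assms by simp
  show "x2\<^sup>\<dagger> \<cdot> x2 \<oplus> x2\<^sup>\<dagger> \<cdot> x1 = zr K K"
    using comp_hadd_distrib[OF x1 x2 x2'] hadd_commute[of "x2\<^sup>\<dagger> \<cdot> x1" K K "x2\<^sup>\<dagger> \<cdot> x2"] assms
    by (simp add: in_hom_iff)
qed

context
  fixes Y P s1 s2 \<Delta> k
  assumes onb: "orthonormal_biproduct C Y Y P s1 (s1\<^sup>\<dagger>) s2 (s2\<^sup>\<dagger>)"
    and \<Delta>: "\<Delta> \<in> hom C Y P" "s1\<^sup>\<dagger> \<cdot> \<Delta> = idm Y" "s2\<^sup>\<dagger> \<cdot> \<Delta> = idm Y"
    and k: "is_kernel C (\<Delta>\<^sup>\<dagger>) k" "k\<^sup>\<dagger> \<cdot> k = idm (dm k)"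
begin

private lemma bp: "biproduct C Y Y P s1 (s1\<^sup>\<dagger>) s2 (s2\<^sup>\<dagger>)"
  using orthonormal_biproductD[OF onb] .

private lemmas B = biproductD[OF bp]

private lemma k_hom [simp]: "arr k" "cd k = P" "ob (dm k)"
  using is_kernelD[OF k(1)] \<Delta>(1) by (auto simp: in_hom_iff)

private lemma diagonal_data_simps [simp]: "arr \<Delta>" "dm \<Delta> = Y" "cd \<Delta> = P" "arr s1" "dm s1 = Y" "cd s1 = P"
  "arr s2" "dm s2 = Y" "cd s2 = P" "ob Y" "ob P"
  using \<Delta>(1) B by (auto simp: in_hom_iff)

private lemma diagonal_star_injection: "\<Delta>\<^sup>\<dagger> \<cdot> s1 = idm Y" "\<Delta>\<^sup>\<dagger> \<cdot> s2 = idm Y"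
  using star_comp[of \<Delta> "s1\<^sup>\<dagger>"] star_comp[of \<Delta> "s2\<^sup>\<dagger>"] \<Delta> by auto

lemma diagonal_kernel_components:
  "s1\<^sup>\<dagger> \<cdot> k \<oplus> s2\<^sup>\<dagger> \<cdot> k = zr (dm k) Y"
  "k\<^sup>\<dagger> \<cdot> s1 \<oplus> k\<^sup>\<dagger> \<cdot> s2 = zr Y (dm k)"
  "(k\<^sup>\<dagger> \<cdot> s1) \<cdot> (s1\<^sup>\<dagger> \<cdot> k) \<oplus> (k\<^sup>\<dagger> \<cdot> s2) \<cdot> (s2\<^sup>\<dagger> \<cdot> k) = idm (dm k)"
proof -
  have kh: "k \<in> hom C (dm k) P" "k\<^sup>\<dagger> \<in> hom C P (dm k)" "\<Delta>\<^sup>\<dagger> \<in> hom C P Y"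
    by (simp_all add: in_hom_iff)
  note [simp] = comp_reassoc[OF diagonal_star_injection(1)] comp_reassoc[OF diagonal_star_injection(2)]
  have "\<Delta>\<^sup>\<dagger> \<cdot> k = zr (dm k) Y" using is_kernelD[OF k(1)] by simp
  then show "s1\<^sup>\<dagger> \<cdot> k \<oplus> s2\<^sup>\<dagger> \<cdot> k = zr (dm k) Y"
    using comp_eq_hadd_biproduct[OF bp kh(1,3)] by simp
  have "k\<^sup>\<dagger> \<cdot> \<Delta> = (\<Delta>\<^sup>\<dagger> \<cdot> k)\<^sup>\<dagger>" by simp
  also have "\<dots> = zr Y (dm k)" using is_kernelD[OF k(1)] by simp
  finally show "k\<^sup>\<dagger> \<cdot> s1 \<oplus> k\<^sup>\<dagger> \<cdot> s2 = zr Y (dm k)"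
    using comp_eq_hadd_biproduct[OF bp \<Delta>(1) kh(2)] \<Delta>(2,3) by simp
  show "(k\<^sup>\<dagger> \<cdot> s1) \<cdot> (s1\<^sup>\<dagger> \<cdot> k) \<oplus> (k\<^sup>\<dagger> \<cdot> s2) \<cdot> (s2\<^sup>\<dagger> \<cdot> k) = idm (dm k)"
    using comp_eq_hadd_biproduct[OF bp kh(1,2)] k(2) by simp
qed

text \<open>Here (R4) enters: k is the complement of the diagonal, and a map orthogonal to it
  is killed by the morphism whose kernel is the diagonal, so it factors through the diagonal.\<close>

lemma components_eq_if_kernel_orthogonal:
  assumes u: "u \<in> hom C X P" and ku: "k\<^sup>\<dagger> \<cdot> u = zr X (dm k)"
  shows "s1\<^sup>\<dagger> \<cdot> u = s2\<^sup>\<dagger> \<cdot> u"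
proof -
  note [simp] = u[unfolded in_hom_iff]
  have [simp]: "ob X" using hom_obj u by blast
  obtain f where f: "is_kernel C f \<Delta>" using diagonal_is_kernel[OF onb \<Delta>] by blast
  note F = is_kernelD[OF f]
  note [simp] = F(1) F(3)[symmetric]
  have "\<Delta>\<^sup>\<dagger> \<cdot> f\<^sup>\<dagger> = (f \<cdot> \<Delta>)\<^sup>\<dagger>" by simp
  also have "\<dots> = zr (cd f) (cd (\<Delta>\<^sup>\<dagger>))" using F(4) by simp
  finally have "\<Delta>\<^sup>\<dagger> \<cdot> f\<^sup>\<dagger> = zr (cd f) (cd (\<Delta>\<^sup>\<dagger>))" .
  moreover have "f\<^sup>\<dagger> \<in> hom C (cd f) (dm (\<Delta>\<^sup>\<dagger>))" by (simp add: in_hom_iff)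
  ultimately obtain t where t: "t \<in> hom C (cd f) (dm k)" "k \<cdot> t = f\<^sup>\<dagger>"
    using kernel_factorE[OF k(1)] by blast
  note [simp] = t(1)[unfolded in_hom_iff]
  have "f = t\<^sup>\<dagger> \<cdot> k\<^sup>\<dagger>" using star_comp[of t k] t(2) by simp
  moreover have "(t\<^sup>\<dagger> \<cdot> k\<^sup>\<dagger>) \<cdot> u = zr X (cd f)" using ku by simp
  ultimately have "f \<cdot> u = zr X (cd f)" by metis
  moreover have "u \<in> hom C X (dm f)" by (simp add: in_hom_iff)
  ultimately obtain h where h: "h \<in> hom C X (dm \<Delta>)" "\<Delta> \<cdot> h = u"
    using kernel_factorE[OF f] by blast
  then show ?thesis
    using comp_reassoc[OF \<Delta>(2), of h] comp_reassoc[OF \<Delta>(3), of h] by (auto simp: in_hom_iff)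
qed

end

text \<open>With k = (k1, k2) the complement of the diagonal, k1 + k2 = 0 and
  k1\<dagger> k1 = k2\<dagger> k2 = 1/2. For d = 2 k1\<dagger> the map (k1 d, 1) is orthogonal to k, hence
  diagonal, so k1 d = 1 and k2 d = -1.\<close>

lemma neg_id_exists:
  assumes "ob Y"
  obtains n where "n \<in> hom C Y Y" "idm Y \<oplus> n = zr Y Y"
proof -
  obtain P s1 s2 where onb: "orthonormal_biproduct C Y Y P s1 (s1\<^sup>\<dagger>) s2 (s2\<^sup>\<dagger>)"
    using orthonormal_biproductE[OF assms assms] by blast
  note bp = orthonormal_biproductD[OF onb]
  note B = biproductD[OF bp]
  note [simp] = B(1-4)[unfolded in_hom_iff] B(9-11)
  have idY: "idm Y \<in> hom C Y Y" by (simp add: in_hom_iff)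
  obtain \<Delta> where \<Delta>: "\<Delta> \<in> hom C Y P" "s1\<^sup>\<dagger> \<cdot> \<Delta> = idm Y" "s2\<^sup>\<dagger> \<cdot> \<Delta> = idm Y"
    using biproduct_pairE[OF bp idY idY] by blast
  obtain k where k: "is_kernel C (\<Delta>\<^sup>\<dagger>) k" "k\<^sup>\<dagger> \<cdot> k = idm (dm k)"
    using isometric_kernel_exists[of "\<Delta>\<^sup>\<dagger>"] \<Delta>(1) by (auto simp: in_hom_iff)
  define K k1 k2 where "K = dm k" and "k1 = s1\<^sup>\<dagger> \<cdot> k" and "k2 = s2\<^sup>\<dagger> \<cdot> k"
  have [simp]: "dm k = K" by (simp add: K_def)
  have [simp]: "arr k" "cd k = P"
    using is_kernelD[OF k(1)] \<Delta>(1) by (auto simp: in_hom_iff)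
  have [simp]: "ob K" using obj_dom[of k] by simp
  have k1: "k1 \<in> hom C K Y" and k2: "k2 \<in> hom C K Y" by (simp_all add: k1_def k2_def in_hom_iff)
  note [simp] = k1[unfolded in_hom_iff] k2[unfolded in_hom_iff]
  have k1': "k1\<^sup>\<dagger> \<in> hom C Y K" by (simp add: in_hom_iff)
  have sums: "k1 \<oplus> k2 = zr K Y" "k1\<^sup>\<dagger> \<oplus> k2\<^sup>\<dagger> = zr Y K" "k1\<^sup>\<dagger> \<cdot> k1 \<oplus> k2\<^sup>\<dagger> \<cdot> k2 = idm K"
    using diagonal_kernel_components[OF onb \<Delta> k] by (simp_all add: k1_def k2_def)
  define a where "a = k1\<^sup>\<dagger> \<cdot> k1"
  have a: "a \<in> hom C K K" by (simp add: a_def in_hom_iff)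
  have aa: "a \<oplus> a = idm K"
    using sums(3) star_comp_self_eq_of_hadd_zero[OF k1 k2 sums(1,2)] by (simp add: a_def)
  define d where "d = k1\<^sup>\<dagger> \<oplus> k1\<^sup>\<dagger>"
  have d: "d \<in> hom C Y K" using k1' by (simp add: d_def)
  note [simp] = d[unfolded in_hom_iff]
  have "a \<cdot> d = k1\<^sup>\<dagger>"
    using comp_hadd_distrib[OF k1' k1' a] hadd_comp_distrib[OF a a k1'] aa by (simp add: d_def)
  then have k1k1d: "k1\<^sup>\<dagger> \<cdot> k1 \<cdot> d = k1\<^sup>\<dagger>" by (simp add: a_def)
  have k1d: "k1 \<cdot> d \<in> hom C Y Y" by (simp add: in_hom_iff)
  obtain u where u: "u \<in> hom C Y P" "s1\<^sup>\<dagger> \<cdot> u = k1 \<cdot> d" "s2\<^sup>\<dagger> \<cdot> u = idm Y"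
    using biproduct_pairE[OF bp k1d idY] by blast
  have "k\<^sup>\<dagger> \<in> hom C P K" by (simp add: in_hom_iff)
  from comp_eq_hadd_biproduct[OF bp u(1) this]
  have "k\<^sup>\<dagger> \<cdot> u = zr Y K"
    using u k1k1d sums(2) by (simp add: k1_def k2_def)
  then have "k1 \<cdot> d = idm Y"
    using components_eq_if_kernel_orthogonal[OF onb \<Delta> k u(1)] u by simp
  then have "idm Y \<oplus> k2 \<cdot> d = (k1 \<oplus> k2) \<cdot> d" using hadd_comp_distrib[OF k1 k2 d] by simp
  also have "\<dots> = zr Y Y" using sums(1) by simp
  finally show ?thesis using that[of "k2 \<cdot> d"] by (simp add: in_hom_iff)
qed

lemma neg_exists:
  assumes f: "f \<in> hom C X Y"
  shows "\<exists>g. g \<in> hom C X Y \<and> f \<oplus> g = zr X Y"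
proof -
  have [simp]: "ob X" "ob Y" using hom_obj f by blast+
  obtain n where n: "n \<in> hom C Y Y" "idm Y \<oplus> n = zr Y Y" using neg_id_exists[OF \<open>ob Y\<close>] by blast
  have idY: "idm Y \<in> hom C Y Y" by (simp add: in_hom_iff)
  note [simp] = f[unfolded in_hom_iff] n(1)[unfolded in_hom_iff]
  have "f \<oplus> n \<cdot> f = zr X Y" using hadd_comp_distrib[OF idY n(1) f] n(2) by simp
  moreover have "n \<cdot> f \<in> hom C X Y" by (simp add: in_hom_iff)
  ultimately show ?thesis by blast
qed

lemma hneg:
  assumes f: "f \<in> hom C X Y"
  shows "hneg C f \<in> hom C X Y" "f \<oplus> hneg C f = zr X Y"
proof -
  have df: "dm f = X" "cd f = Y" using f by (simp_all add: in_hom_iff)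
  have "\<exists>!g. g \<in> hom C X Y \<and> f \<oplus> g = zr X Y"
  proof -
    obtain g where g: "g \<in> hom C X Y" "f \<oplus> g = zr X Y" using neg_exists[OF f] by blast
    moreover have "g' = g" if "g' \<in> hom C X Y" "f \<oplus> g' = zr X Y" for g'
      using hadd_inverse_unique[OF that(1) g(1) f] hadd_commute f g that by metis
    ultimately show ?thesis by blast
  qed
  then have "hneg C f \<in> hom C X Y \<and> f \<oplus> hneg C f = zr X Y"
    unfolding hneg_def df by (rule theI')
  then show "hneg C f \<in> hom C X Y" "f \<oplus> hneg C f = zr X Y" by auto
qed

lemma hminus_hadd_cancel:
  assumes f: "f \<in> hom C X Y" and g: "g \<in> hom C X Y"
  shows "(f \<ominus> g) \<oplus> g = f"
proof -
  note n = hneg[OF g]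
  have "(f \<ominus> g) \<oplus> g = f \<oplus> (g \<oplus> hneg C g)"
    unfolding hminus_def using hadd_assoc[OF f n(1) g] hadd_commute[OF g n(1)] by simp
  then show ?thesis using n(2) hadd_zmor_right[OF f] by simp
qed

lemma hminus_zmor:
  assumes f: "f \<in> hom C X Y"
  shows "f \<ominus> zr X Y = f"
proof -
  have [simp]: "ob X" "ob Y" using hom_obj f by blast+
  have "hneg C (zr X Y) = zr X Y"
    using hneg[of "zr X Y"] hadd_zmor_left[OF hneg(1)[of "zr X Y"]] by simp
  then show ?thesis unfolding hminus_def using hadd_zmor_right[OF f] by simp
qed

lemma hneg_unique:
  assumes "f \<in> hom C X Y" "g \<in> hom C X Y" "f \<oplus> g = zr X Y"
  shows "hneg C f = g"
  using hadd_inverse_unique[OF hneg(1) assms(2,1)] hneg[OF assms(1)] hadd_commute assms by metis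

lemma hminus_hom [simp]: "f \<in> hom C X Y \<Longrightarrow> g \<in> hom C X Y \<Longrightarrow> f \<ominus> g \<in> hom C X Y"
  unfolding hminus_def using hneg(1) by simp

lemma hminus_self: "f \<in> hom C X Y \<Longrightarrow> f \<ominus> f = zr X Y"
  unfolding hminus_def using hneg(2) .

lemma eq_of_hminus_eq_zmor:
  assumes "f \<in> hom C X Y" "g \<in> hom C X Y" "f \<ominus> g = zr X Y"
  shows "f = g"
  using hminus_hadd_cancel[OF assms(1,2)] hadd_zmor_left[OF assms(2)] assms(3) by simp

lemma hminus_comp_distrib:
  assumes f: "f \<in> hom C X Y" and g: "g \<in> hom C X Y" and k: "k \<in> hom C W X"
  shows "(f \<ominus> g) \<cdot> k = (f \<cdot> k) \<ominus> (g \<cdot> k)"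
proof -
  note n = hneg[OF g]
  have [simp]: "ob W" "ob Y" using hom_obj k g by blast+
  note [simp] = f[unfolded in_hom_iff] g[unfolded in_hom_iff] k[unfolded in_hom_iff]
    n(1)[unfolded in_hom_iff]
  have "hneg C (g \<cdot> k) = hneg C g \<cdot> k"
    using hneg_unique[of "g \<cdot> k" W Y "hneg C g \<cdot> k"] hadd_comp_distrib[OF g n(1) k] n(2)
    by (simp add: in_hom_iff)
  then show ?thesis unfolding hminus_def using hadd_comp_distrib[OF f n(1) k] by simp
qed

section \<open>Split monos and positive invertible elements\<close>

lemma split_mono_factorE:
  assumes w: "w \<in> hom C A Q" and l: "l \<in> hom C Q A" and lw: "l \<cdot> w = idm A"
  obtains M m h g where "m \<in> hom C M Q" "m\<^sup>\<dagger> \<cdot> m = idm M" "h \<in> hom C A M" "g \<in> hom C M A"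
    "w = m \<cdot> h" "g \<cdot> h = idm A" "h \<cdot> g = idm M"
proof -
  note [simp] = w[unfolded in_hom_iff] l[unfolded in_hom_iff]
  have [simp]: "ob A" "ob Q" using hom_obj w by blast+
  have idQ: "idm Q \<in> hom C Q Q" and wl: "w \<cdot> l \<in> hom C Q Q" by (simp_all add: in_hom_iff)
  \<comment> \<open>E is idempotent and kills exactly the image of w, so its isometric kernel is an
    isometric copy of that image.\<close>
  define E where "E = idm Q \<ominus> w \<cdot> l"
  have E: "E \<in> hom C Q Q" unfolding E_def using idQ wl by simp
  have E_comp: "E \<cdot> x = x \<ominus> w \<cdot> l \<cdot> x" if "x \<in> hom C X Q" for x X
    using hminus_comp_distrib[OF idQ wl that] that by (simp add: E_def in_hom_iff)
  obtain m where m: "is_kernel C E m" "m\<^sup>\<dagger> \<cdot> m = idm (dm m)"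
    using isometric_kernel_exists E by (auto simp: in_hom_iff)
  define M where "M = dm m"
  have [simp]: "dm m = M" by (simp add: M_def)
  have [simp]: "arr m" "cd m = Q" using is_kernelD[OF m(1)] E by (auto simp: in_hom_iff)
  have [simp]: "ob M" using obj_dom[of m] by simp
  have mh: "m \<in> hom C M Q" by (simp add: in_hom_iff)
  have "E \<cdot> w = zr A (cd E)"
    using E_comp[OF w] lw hminus_self[OF w] E by (simp add: in_hom_iff)
  moreover have "w \<in> hom C A (dm E)" using w E by (simp add: in_hom_iff)
  ultimately obtain h where h: "h \<in> hom C A (dm m)" "m \<cdot> h = w"
    using kernel_factorE[OF m(1)] by blast
  note [simp] = h(1)[unfolded in_hom_iff]
  have "m \<ominus> w \<cdot> l \<cdot> m = zr M Q"
    using E_comp[OF mh] is_kernelD[OF m(1)] E by (simp add: in_hom_iff)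
  moreover have "w \<cdot> l \<cdot> m \<in> hom C M Q" by (simp add: in_hom_iff)
  ultimately have mwlm: "m = w \<cdot> l \<cdot> m" using eq_of_hminus_eq_zmor[OF mh] by blast
  define g where "g = l \<cdot> m"
  have "h \<cdot> g = m\<^sup>\<dagger> \<cdot> (m \<cdot> h) \<cdot> l \<cdot> m" using comp_reassoc[OF m(2)] by (simp add: g_def)
  also have "\<dots> = idm M" using h(2) mwlm[symmetric] m(2) by simp
  finally have "h \<cdot> g = idm M" .
  moreover have "g \<cdot> h = idm A" using h(2) lw by (simp add: g_def)
  moreover have "g \<in> hom C M A" "h \<in> hom C A M" "m\<^sup>\<dagger> \<cdot> m = idm M"
    using m(2) by (simp_all add: g_def in_hom_iff)
  ultimately show ?thesis using that[OF mh _ _ _ h(2)[symmetric]] by blast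
qed

lemma star_comp_self_invertible:
  assumes w: "w \<in> hom C A Q" and l: "l \<in> hom C Q A" and lw: "l \<cdot> w = idm A"
  shows "invertible_mor C (w\<^sup>\<dagger> \<cdot> w)"
proof -
  obtain M m h g where m: "m \<in> hom C M Q" "m\<^sup>\<dagger> \<cdot> m = idm M" and h: "h \<in> hom C A M"
    and g: "g \<in> hom C M A" and "w = m \<cdot> h" "g \<cdot> h = idm A" "h \<cdot> g = idm M"
    by (rule split_mono_factorE[OF assms])
  note [simp] = m(1)[unfolded in_hom_iff] h[unfolded in_hom_iff] g[unfolded in_hom_iff]
  have [simp]: "ob A" "ob M" using hom_obj h by blast+
  have ww: "w\<^sup>\<dagger> \<cdot> w = h\<^sup>\<dagger> \<cdot> h" using \<open>w = m \<cdot> h\<close> comp_reassoc[OF m(2), of h] by simp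
  have "g\<^sup>\<dagger> \<cdot> h\<^sup>\<dagger> = idm M" "h\<^sup>\<dagger> \<cdot> g\<^sup>\<dagger> = idm A"
    using star_comp[of g h] star_comp[of h g] \<open>h \<cdot> g = idm M\<close> \<open>g \<cdot> h = idm A\<close> by simp_all
  then have "(g \<cdot> g\<^sup>\<dagger>) \<cdot> h\<^sup>\<dagger> \<cdot> h = idm A" "(h\<^sup>\<dagger> \<cdot> h) \<cdot> g \<cdot> g\<^sup>\<dagger> = idm A"
    using comp_reassoc[of "g\<^sup>\<dagger>" "h\<^sup>\<dagger>"] comp_reassoc[OF \<open>h \<cdot> g = idm M\<close>] \<open>g \<cdot> h = idm A\<close> by simp_all
  moreover have "g \<cdot> g\<^sup>\<dagger> \<in> hom C A A" by (simp add: in_hom_iff)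
  ultimately show ?thesis
    unfolding invertible_mor_def ww
    by (auto simp: in_hom_iff intro!: bexI[of _ "g \<cdot> g\<^sup>\<dagger>"])
qed

lemma star_comp_self_orthonormal_biproduct:
  assumes onb: "orthonormal_biproduct C Z Y Q t1 (t1\<^sup>\<dagger>) t2 (t2\<^sup>\<dagger>)" and w: "w \<in> hom C A Q"
  shows "w\<^sup>\<dagger> \<cdot> w = (t1\<^sup>\<dagger> \<cdot> w)\<^sup>\<dagger> \<cdot> (t1\<^sup>\<dagger> \<cdot> w) \<oplus> (t2\<^sup>\<dagger> \<cdot> w)\<^sup>\<dagger> \<cdot> (t2\<^sup>\<dagger> \<cdot> w)"
proof -
  note bp = orthonormal_biproductD[OF onb]
  note B = biproductD[OF bp]
  note [simp] = B(1-4)[unfolded in_hom_iff] w[unfolded in_hom_iff]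
  have "w\<^sup>\<dagger> \<in> hom C Q A" by (simp add: in_hom_iff)
  from comp_eq_hadd_biproduct[OF bp w this] show ?thesis by simp
qed

lemma canon_prec_zmor_iff:
  assumes "ob A"
  shows "canon_prec C A (zr A A) a \<longleftrightarrow> a \<in> hom C A A \<and> hermitian C a \<and>
    (\<exists>Y \<in> Obj C. \<exists>y \<in> hom C A Y. a = y\<^sup>\<dagger> \<cdot> y) \<and> invertible_mor C a"
  using assms hminus_zmor[of a A A]
  unfolding canon_prec_def canon_le_def hermitian_def by (auto; blast)

end

theorem proposition6p5:
  fixes C :: "('o, 'm) starcat" and A :: 'o and a b :: 'm
  assumes "pre_hilbert_star_category C"
    and "A \<in> Obj C"
    and "a \<in> hom C A A" and "b \<in> hom C A A"
    and "hermitian C a" and "hermitian C b"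
    and "canon_le C A b a"
    and "canon_prec C A (zmor C A A) b"
  shows "canon_prec C A (zmor C A A) a"
proof -
  interpret pre_hilbert C by (rule pre_hilbert.intro) (fact assms(1))
  obtain Y y where y: "y \<in> hom C A Y" and ab: "a \<ominus> b = y\<^sup>\<dagger> \<cdot> y"
    using assms(7) unfolding canon_le_def by blast
  obtain Z z where z: "z \<in> hom C A Z" and bz: "b = z\<^sup>\<dagger> \<cdot> z" and "invertible_mor C b"
    using assms(8) canon_prec_zmor_iff[OF assms(2)] by blast
  then obtain b' where b': "b' \<in> hom C A A" "b' \<cdot> b = idm A"
    unfolding invertible_mor_def using assms(4) by (auto simp: in_hom_iff)
  obtain Q t1 t2 where onb: "orthonormal_biproduct C Z Y Q t1 (t1\<^sup>\<dagger>) t2 (t2\<^sup>\<dagger>)"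
    using orthonormal_biproductE hom_obj(2) z y by metis
  obtain w where w: "w \<in> hom C A Q" "t1\<^sup>\<dagger> \<cdot> w = z" "t2\<^sup>\<dagger> \<cdot> w = y"
    using biproduct_pairE[OF orthonormal_biproductD[OF onb] z y] by blast
  have "w\<^sup>\<dagger> \<cdot> w = b \<oplus> (a \<ominus> b)"
    using star_comp_self_orthonormal_biproduct[OF onb w(1)] w bz ab by simp
  also have "\<dots> = a"
    using hadd_commute hminus_hadd_cancel assms(3,4) hminus_hom by metis
  finally have ww: "w\<^sup>\<dagger> \<cdot> w = a" .
  have t1: "t1 \<in> hom C Z Q" using biproductD(1)[OF orthonormal_biproductD[OF onb]] .
  have l: "b' \<cdot> z\<^sup>\<dagger> \<cdot> t1\<^sup>\<dagger> \<in> hom C Q A" and lw: "(b' \<cdot> z\<^sup>\<dagger> \<cdot> t1\<^sup>\<dagger>) \<cdot> w = idm A"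
    using w b' z bz t1 by (simp_all add: in_hom_iff)
  have "invertible_mor C a"
    using star_comp_self_invertible[OF w(1) l lw] ww by simp
  then show ?thesis
    using canon_prec_zmor_iff[OF assms(2)] assms(3,5) w(1) ww hom_obj by metis
qed

end
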